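(* Let $m$ and $c$ be positive integers, and for $0\le k\le n$ let $T_{n,k}$ be the number of $(c,m)$-colored $B_n$-partitions with exactly $k$ non-zero-blocks. For every $n\ge 1$, the polynomial $T_n(x)=\sum_{k=0}^n T_{n,k}\,x^k$ has $n$ distinct negative real roots.
   Context: Let $n,m,c$ be positive integers, let $C_1$ be a list of $c$ colors and $C_2$ a list of $m$ colors. A $(c,m)$-colored $B_n$-partition is a set partition $\pi$ of $[n]\cup\{0\}$ together with a coloring of the elements of $[n]$ defined as follows. For $x\in[n]\cup\{0\}$ let $b_x$ be the block of $\pi$ containing $x$. The block $b_0$ is called the zero-block, and every other block is a non-zero-block. Each $x\in[n]$ receives a color according to these rules: if $x=\min b_x$, then $x$ gets the first color of $C_2$; if $x\ne\min b_x$ and $x\in b_0$, then $x$ gets an arbitrary color from $C_1$; if $x\ne \min b_x$ and $x\notin b_0$, then $x$ gets an arbitrary color from $C_2$. Two such objects are equal exactly when they have the same underlying partition and the same coloring. (Note that when $0$ is the minimum of $b_0$, every element of $b_0\setminus\{0\}$ is colored from $C_1$.) *)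

theory Defs
  imports Complex_Main "HOL-Library.Disjoint_Sets"
begin

text \<open>Colors: C1 = {0..<c}, C2 = {0..<m}; the first color of C2 is 0.
  A colored B_n-partition is a pair (P, col) with P a set partition of {0..n}
  and col a coloring of [n] = {1..n} (normalised to 0 outside [n]).\<close>

definition colored_B_partitions :: "nat \<Rightarrow> nat \<Rightarrow> nat \<Rightarrow> (nat set set \<times> (nat \<Rightarrow> nat)) set" where
  "colored_B_partitions c m n =
    {(P, col). partition_on {0..n} P \<and>
       (\<forall>b\<in>P. \<forall>x\<in>b. x \<noteq> 0 \<longrightarrow>
          (if x = Min b then col x = 0
           else if 0 \<in> b then col x < c
           else col x < m)) \<and>
       (\<forall>x. x \<notin> {1..n} \<longrightarrow> col x = 0)}"

definition nonzero_blocks :: "nat set set \<Rightarrow> nat set set" where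
  "nonzero_blocks P = {b \<in> P. 0 \<notin> b}"

definition T_num :: "nat \<Rightarrow> nat \<Rightarrow> nat \<Rightarrow> nat \<Rightarrow> nat" where
  "T_num c m n k = card {(P, col) \<in> colored_B_partitions c m n. card (nonzero_blocks P) = k}"

end

theory Submission
  imports Defs "HOL-Computational_Algebra.Polynomial"
begin

text \<open>
  Removing the largest element \<open>n+1\<close> from a colored \<open>B\<^sub>n\<^sub>+\<^sub>1\<close>-partition either deletes a
  singleton block (whose color is forced) or deletes \<open>n+1\<close> from a block \<open>b\<close> of a colored
  \<open>B\<^sub>n\<close>-partition, where it carried one of \<open>c\<close> colors if \<open>b\<close> is the zero-block and one of
  \<open>m\<close> colors otherwise. Hence \<open>T(n+1,k) = T(n,k-1) + (c + m k) T(n,k)\<close>, that is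
  \<open>T\<^sub>n\<^sub>+\<^sub>1(x) = (x + c) T\<^sub>n(x) + m x T\<^sub>n'(x)\<close>.

  If \<open>T\<^sub>n\<close> has simple roots \<open>r\<^sub>0 < \<dots> < r\<^sub>n\<^sub>-\<^sub>1 < 0\<close>, then \<open>T\<^sub>n\<^sub>+\<^sub>1(r\<^sub>i) = m r\<^sub>i T\<^sub>n'(r\<^sub>i)\<close>
  alternates in sign, \<open>T\<^sub>n\<^sub>+\<^sub>1(0) = c T\<^sub>n(0) > 0\<close>, and far to the left \<open>T\<^sub>n\<^sub>+\<^sub>1\<close> has the sign
  of \<open>(-1)\<^sup>n\<^sup>+\<^sup>1\<close>. The intermediate value theorem yields \<open>n+1\<close> negative roots interlacing the
  \<open>r\<^sub>i\<close>, and these are all the roots of the monic polynomial \<open>T\<^sub>n\<^sub>+\<^sub>1\<close> of degree \<open>n+1\<close>.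
\<close>

section \<open>Adding a point to a set partition\<close>

lemma partition_on_block_unique:
  "partition_on A P \<Longrightarrow> b \<in> P \<Longrightarrow> b' \<in> P \<Longrightarrow> x \<in> b \<Longrightarrow> x \<in> b' \<Longrightarrow> b = b'"
  unfolding partition_on_def disjoint_def by blast

lemma image_eq_self: "(\<And>x. x \<in> A \<Longrightarrow> f x = x) \<Longrightarrow> f ` A = A"
  by (metis (no_types, lifting) image_cong image_ident)

definition add_to_block :: "'a \<Rightarrow> 'a set \<Rightarrow> 'a set set \<Rightarrow> 'a set set" where
  "add_to_block a b P = (\<lambda>x. if x = b then insert a x else x) ` P"

lemma partition_on_insert_singleton:
  "partition_on A P \<Longrightarrow> a \<notin> A \<Longrightarrow> partition_on (insert a A) (insert {a} P)"
  by (subst partition_on_insert) (auto dest: partition_onD1 simp: disjnt_def)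

lemma partition_on_add_to_block:
  "partition_on A P \<Longrightarrow> b \<in> P \<Longrightarrow> a \<notin> A \<Longrightarrow> partition_on (insert a A) (add_to_block a b P)"
  unfolding partition_on_def disjoint_def add_to_block_def by (auto; blast)

lemma partition_on_remove_from_block:
  assumes P: "partition_on (insert a A) P" and a: "a \<notin> A" and B: "B \<in> P" "a \<in> B" "B \<noteq> {a}"
  defines "P0 \<equiv> insert (B - {a}) (P - {B})"
  shows "partition_on A P0" "P = add_to_block a (B - {a}) P0"
proof -
  define b where "b = B - {a}"
  have b: "b \<noteq> {}" "B = insert a b" using B by (auto simp: b_def)
  have P0_eq: "P0 = insert b (P - {B})" by (simp add: P0_def b_def)
  have P_eq: "P = insert B (P - {B})" using B(1) by blast
  have other: "a \<notin> x" if "x \<in> P - {B}" for x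
    using partition_on_block_unique[OF P B(1) _ B(2), of x] that by blast
  have "(\<lambda>x. x - {a}) ` P = insert b ((\<lambda>x. x - {a}) ` (P - {B}))"
    by (subst P_eq) (simp only: image_insert b_def)
  also have "(\<lambda>x. x - {a}) ` (P - {B}) = P - {B}"
    using other by (intro image_eq_self) blast
  finally have "(\<lambda>x. x - {a}) ` P - {{}} = P0"
    using b(1) partition_onD3[OF P] by (auto simp: P0_eq)
  moreover have "partition_on (insert a A - {a}) ((\<lambda>x. x - {a}) ` P - {{}})"
    using P by (rule partition_on_transform) (auto simp: disjnt_def)
  ultimately show "partition_on A P0" using a by simp
  have not_b: "x \<noteq> b" if "x \<in> P - {B}" for x
  proof
    assume "x = b"
    obtain y where "y \<in> b" using b(1) by blast
    then have "x = B"
      using partition_on_block_unique[OF P, of x B y] that B(1) b(2) \<open>x = b\<close> by blast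
    then show False using that by simp
  qed
  have "add_to_block a b P0 = insert (insert a b) ((\<lambda>x. if x = b then insert a x else x) ` (P - {B}))"
    unfolding add_to_block_def P0_eq by (simp only: image_insert if_P[OF refl])
  also have "(\<lambda>x. if x = b then insert a x else x) ` (P - {B}) = P - {B}"
    using not_b by (intro image_eq_self) simp
  finally have "P = add_to_block a b P0" using P_eq b(2) by simp
  then show "P = add_to_block a (B - {a}) P0" by (simp only: b_def)
qed

lemma partition_on_insert_cases:
  assumes P: "partition_on (insert a A) P" and a: "a \<notin> A"
  obtains P0 where "partition_on A P0" "P = insert {a} P0"
    | P0 b where "partition_on A P0" "b \<in> P0" "P = add_to_block a b P0"
proof -
  obtain B where B: "B \<in> P" "a \<in> B" using partition_onD1[OF P] by blast
  show ?thesis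
  proof (cases "B = {a}")
    case True
    have "a \<notin> x" if "x \<in> P - {B}" for x
      using partition_on_block_unique[OF P B(1) _ B(2), of x] that by blast
    then have "disjnt {a} (\<Union>(P - {B}))" by (auto simp: disjnt_def)
    moreover have P_eq: "P = insert {a} (P - {B})" using B(1) True by blast
    ultimately have "partition_on (insert a A - {a}) (P - {B})"
      using P partition_on_insert by metis
    with a have "partition_on A (P - {B})" by simp
    then show ?thesis using P_eq by (rule that(1))
  next
    case False
    show ?thesis
      by (rule that(2)[of "insert (B - {a}) (P - {B})" "B - {a}"])
        (use partition_on_remove_from_block[OF P a B False] in simp_all)
  qed
qed

lemma inj_on_insert_into_block:
  "a \<notin> \<Union>P \<Longrightarrow> inj_on (\<lambda>x. if x = b then insert a x else x) P"
  by (rule inj_onI) (auto split: if_splits)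

lemma remove_from_add_to_block: "a \<notin> \<Union>P \<Longrightarrow> (\<lambda>x. x - {a}) ` add_to_block a b P = P"
  unfolding add_to_block_def image_image by (rule image_eq_self) auto

lemma add_to_block_inject:
  assumes "a \<notin> \<Union>P" "a \<notin> \<Union>P'" "b \<in> P" "b' \<in> P'"
    and eq: "add_to_block a b P = add_to_block a b' P'"
  shows "P = P' \<and> b = b'"
proof
  show "P = P'" using remove_from_add_to_block[of a P b] remove_from_add_to_block[of a P' b'] eq assms
    by simp
  have "insert a b \<in> add_to_block a b' P'"
    using assms(3) eq[symmetric] by (force simp: add_to_block_def)
  then obtain w where w: "w \<in> P'" "insert a b = (if w = b' then insert a w else w)"
    unfolding add_to_block_def by (rule imageE)
  show "b = b'"
  proof (cases "w = b'")
    case True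
    then show ?thesis using w assms(1-4) by (metis Union_iff insert_ident)
  next
    case False
    then show ?thesis using w assms(2) by auto
  qed
qed

lemma singleton_notin_add_to_block:
  assumes "{} \<notin> P" "a \<notin> \<Union>P"
  shows "{a} \<notin> add_to_block a b P"
proof
  assume "{a} \<in> add_to_block a b P"
  then obtain w where "w \<in> P" "{a} = (if w = b then insert a w else w)"
    unfolding add_to_block_def by (rule imageE)
  then show False using assms by (cases "w = b") (auto simp: subset_singleton_iff)
qed

lemma card_nonzero_blocks_insert_singleton:
  assumes "finite P" "{a} \<notin> P" "a \<noteq> 0"
  shows "card (nonzero_blocks (insert {a} P)) = Suc (card (nonzero_blocks P))"
proof -
  from assms have "nonzero_blocks (insert {a} P) = insert {a} (nonzero_blocks P)"
    "{a} \<notin> nonzero_blocks P" "finite (nonzero_blocks P)"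
    by (auto simp: nonzero_blocks_def)
  then show ?thesis by simp
qed

lemma card_nonzero_blocks_add_to_block:
  assumes "a \<notin> \<Union>P" "a \<noteq> 0"
  shows "card (nonzero_blocks (add_to_block a b P)) = card (nonzero_blocks P)"
proof -
  have "nonzero_blocks (add_to_block a b P) = (\<lambda>x. if x = b then insert a x else x) ` nonzero_blocks P"
    using assms(2) by (auto simp: nonzero_blocks_def add_to_block_def)
  moreover have "inj_on (\<lambda>x. if x = b then insert a x else x) (nonzero_blocks P)"
    using assms(1) by (intro inj_on_insert_into_block) (auto simp: nonzero_blocks_def)
  ultimately show ?thesis by (simp only: card_image)
qed

section \<open>Colored B-partitions\<close>

text \<open>The colors allowed for a non-minimal element of block \<open>b\<close>: \<open>C\<^sub>1\<close> in the zero-block,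
  \<open>C\<^sub>2\<close> elsewhere.\<close>

definition palette :: "nat \<Rightarrow> nat \<Rightarrow> nat set \<Rightarrow> nat" where
  "palette c m b = (if 0 \<in> b then c else m)"

definition admissible_block :: "nat \<Rightarrow> nat \<Rightarrow> (nat \<Rightarrow> nat) \<Rightarrow> nat set \<Rightarrow> bool" where
  "admissible_block c m col b \<longleftrightarrow>
     (\<forall>x\<in>b. x \<noteq> 0 \<longrightarrow> (if x = Min b then col x = 0 else col x < palette c m b))"

definition admissible_coloring :: "nat \<Rightarrow> nat \<Rightarrow> nat set set \<Rightarrow> (nat \<Rightarrow> nat) \<Rightarrow> bool" where
  "admissible_coloring c m P col \<longleftrightarrow> (\<forall>b\<in>P. admissible_block c m col b)"

lemma colored_B_partitions_iff:
  "(P, col) \<in> colored_B_partitions c m n \<longleftrightarrow>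
     partition_on {0..n} P \<and> admissible_coloring c m P col \<and> (\<forall>x. x \<notin> {1..n} \<longrightarrow> col x = 0)"
proof -
  have "(if 0 \<in> b then col x < c else col x < m) \<longleftrightarrow> col x < palette c m b" for b x
    by (simp add: palette_def)
  then show ?thesis
    by (simp add: colored_B_partitions_def admissible_coloring_def admissible_block_def)
qed

lemma admissible_block_update_other:
  assumes "a \<notin> b"
  shows "admissible_block c m (col(a := j)) b \<longleftrightarrow> admissible_block c m col b"
  unfolding admissible_block_def
proof (rule ball_cong[OF refl])
  fix x assume "x \<in> b"
  then have "x \<noteq> a" using assms by blast
  then show "(x \<noteq> 0 \<longrightarrow> (if x = Min b then (col(a := j)) x = 0 else (col(a := j)) x < palette c m b)) \<longleftrightarrow>
    (x \<noteq> 0 \<longrightarrow> (if x = Min b then col x = 0 else col x < palette c m b))"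
    by simp
qed

lemma admissible_block_insert_max:
  assumes b: "finite b" "b \<noteq> {}" and less: "\<forall>y\<in>b. y < a"
  shows "admissible_block c m (col(a := j)) (insert a b) \<longleftrightarrow>
    admissible_block c m col b \<and> j < palette c m b"
proof -
  have "Min b < a" using b less Min_in by blast
  have "Min (insert a b) = min a (Min b)" by (rule Min_insert[OF b])
  also have "\<dots> = Min b" using \<open>Min b < a\<close> by simp
  finally have Min: "Min (insert a b) = Min b" .
  have "a \<noteq> 0" "a \<notin> b" using less b(2) by auto
  then have "palette c m (insert a b) = palette c m b" by (simp add: palette_def)
  then have "admissible_block c m (col(a := j)) (insert a b) \<longleftrightarrow>
      j < palette c m b \<and> admissible_block c m (col(a := j)) b"
    using Min \<open>Min b < a\<close> \<open>a \<noteq> 0\<close> by (simp add: admissible_block_def)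
  then show ?thesis using admissible_block_update_other[OF \<open>a \<notin> b\<close>] by blast
qed

lemma admissible_coloring_insert_singleton_iff:
  assumes "a \<noteq> 0"
  shows "admissible_coloring c m (insert {a} P) col \<longleftrightarrow> admissible_coloring c m P col \<and> col a = 0"
proof -
  have "admissible_block c m col {a} \<longleftrightarrow> col a = 0"
    using assms by (simp add: admissible_block_def)
  then show ?thesis by (auto simp: admissible_coloring_def)
qed

lemma admissible_coloring_add_to_block_iff:
  assumes b: "b \<in> P" "finite b" "b \<noteq> {}" and less: "\<forall>y\<in>b. y < a" and a: "a \<notin> \<Union>P"
  shows "admissible_coloring c m (add_to_block a b P) (col(a := j)) \<longleftrightarrow>
    admissible_coloring c m P col \<and> j < palette c m b"
proof -
  have "admissible_coloring c m (add_to_block a b P) (col(a := j)) \<longleftrightarrow>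
      admissible_block c m (col(a := j)) (insert a b) \<and>
      (\<forall>y\<in>P - {b}. admissible_block c m (col(a := j)) y)"
    using b(1) by (auto simp: admissible_coloring_def add_to_block_def)
  also have "\<dots> \<longleftrightarrow> admissible_block c m col b \<and> j < palette c m b \<and>
      (\<forall>y\<in>P - {b}. admissible_block c m col y)"
    using a by (simp add: admissible_block_insert_max[OF b(2,3) less] admissible_block_update_other)
  also have "\<dots> \<longleftrightarrow> admissible_coloring c m P col \<and> j < palette c m b"
    using b(1) by (auto simp: admissible_coloring_def)
  finally show ?thesis .
qed

lemma partition_on_atLeastAtMost_block:
  assumes "partition_on {0..n} P" "b \<in> P"
  shows "finite b" "b \<noteq> {}" "\<forall>y\<in>b. y < Suc n"
proof -
  have "b \<subseteq> {0..n}" using partition_onD1[OF assms(1)] assms(2) by blast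
  then show "finite b" "\<forall>y\<in>b. y < Suc n" by (auto intro: finite_subset)
  show "b \<noteq> {}" using partition_onD3[OF assms(1)] assms(2) by blast
qed

lemma Suc_notin_partition_on_atLeastAtMost:
  assumes "partition_on {0..n} P"
  shows "Suc n \<notin> \<Union>P"
proof
  assume "Suc n \<in> \<Union>P"
  then have "Suc n \<in> {0..n}" using partition_onD1[OF assms] by blast
  then show False by simp
qed

lemma colored_B_partition_facts:
  assumes "(P, col) \<in> colored_B_partitions c m n"
  shows "partition_on {0..n} P" "finite P" "Suc n \<notin> \<Union>P" "{Suc n} \<notin> P" "{} \<notin> P"
    "col (Suc n) = 0"
proof -
  show P: "partition_on {0..n} P" using assms by (simp add: colored_B_partitions_iff)
  then show "finite P" by (intro finite_elements[OF finite_atLeastAtMost])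
  show "Suc n \<notin> \<Union>P" by (rule Suc_notin_partition_on_atLeastAtMost[OF P])
  then show "{Suc n} \<notin> P" by blast
  show "{} \<notin> P" by (rule partition_onD3[OF P])
  show "col (Suc n) = 0" using assms by (simp add: colored_B_partitions_iff)
qed

lemma colored_B_partition_insert_singleton:
  assumes "(P, col) \<in> colored_B_partitions c m n"
  shows "(insert {Suc n} P, col) \<in> colored_B_partitions c m (Suc n)"
proof -
  have P: "partition_on {0..n} P" and "admissible_coloring c m P col"
    and zero: "\<forall>x. x \<notin> {1..n} \<longrightarrow> col x = 0"
    using assms by (simp_all add: colored_B_partitions_iff)
  moreover have "\<forall>x. x \<notin> {1..Suc n} \<longrightarrow> col x = 0" using zero by auto
  moreover have "partition_on {0..Suc n} (insert {Suc n} P)"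
    using partition_on_insert_singleton[OF P, of "Suc n"] by (simp add: atLeastAtMostSuc_conv)
  ultimately show ?thesis
    by (simp add: colored_B_partitions_iff admissible_coloring_insert_singleton_iff)
qed

lemma colored_B_partition_add_to_block:
  assumes "(P, col) \<in> colored_B_partitions c m n" "b \<in> P" "j < palette c m b"
  shows "(add_to_block (Suc n) b P, col(Suc n := j)) \<in> colored_B_partitions c m (Suc n)"
proof -
  have P: "partition_on {0..n} P" and col: "admissible_coloring c m P col"
    and zero: "\<forall>x. x \<notin> {1..n} \<longrightarrow> col x = 0"
    using assms by (simp_all add: colored_B_partitions_iff)
  have "admissible_coloring c m (add_to_block (Suc n) b P) (col(Suc n := j))"
    using admissible_coloring_add_to_block_iff[OF assms(2) partition_on_atLeastAtMost_block[OF P assms(2)]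
        Suc_notin_partition_on_atLeastAtMost[OF P]] col assms(3) by blast
  moreover have "\<forall>x. x \<notin> {1..Suc n} \<longrightarrow> (col(Suc n := j)) x = 0" using zero by auto
  moreover have "partition_on {0..Suc n} (add_to_block (Suc n) b P)"
    using partition_on_add_to_block[OF P assms(2), of "Suc n"] by (simp add: atLeastAtMostSuc_conv)
  ultimately show ?thesis by (simp add: colored_B_partitions_iff)
qed

lemma colored_B_partition_Suc_cases:
  assumes "(P, col) \<in> colored_B_partitions c m (Suc n)"
  obtains P0 where "(P0, col) \<in> colored_B_partitions c m n" "P = insert {Suc n} P0"
    | P0 b where "(P0, col(Suc n := 0)) \<in> colored_B_partitions c m n" "b \<in> P0"
        "col (Suc n) < palette c m b" "P = add_to_block (Suc n) b P0"
proof -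
  have P: "partition_on (insert (Suc n) {0..n}) P" and col: "admissible_coloring c m P col"
    and zero: "\<forall>x. x \<notin> {1..Suc n} \<longrightarrow> col x = 0"
    using assms by (simp_all add: colored_B_partitions_iff atLeastAtMostSuc_conv)
  show ?thesis
  proof (rule partition_on_insert_cases[OF P])
    fix P0 assume P0: "partition_on {0..n} P0" and P_eq: "P = insert {Suc n} P0"
    then have "admissible_coloring c m P0 col" "col (Suc n) = 0"
      using col admissible_coloring_insert_singleton_iff[of "Suc n"] by simp_all
    moreover have "col x = 0" if "x \<notin> {1..n}" for x
      using that zero \<open>col (Suc n) = 0\<close> by (cases "x = Suc n") auto
    ultimately have "(P0, col) \<in> colored_B_partitions c m n"
      using P0 by (simp add: colored_B_partitions_iff)
    then show ?thesis using P_eq that(1) by blast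
  next
    fix P0 b assume P0: "partition_on {0..n} P0" and b: "b \<in> P0"
      and P_eq: "P = add_to_block (Suc n) b P0"
    have "admissible_coloring c m (add_to_block (Suc n) b P0) ((col(Suc n := 0))(Suc n := col (Suc n)))"
      using col P_eq by simp
    then have "admissible_coloring c m P0 (col(Suc n := 0))" "col (Suc n) < palette c m b"
      using admissible_coloring_add_to_block_iff[OF b partition_on_atLeastAtMost_block[OF P0 b]
          Suc_notin_partition_on_atLeastAtMost[OF P0]] by blast+
    moreover have "\<forall>x. x \<notin> {1..n} \<longrightarrow> (col(Suc n := 0)) x = 0" using zero by auto
    ultimately show ?thesis using P0 b P_eq that(2) by (simp add: colored_B_partitions_iff)
  qed simp
qed

lemma finite_colored_B_partitions: "finite (colored_B_partitions c m n)"
proof (rule finite_subset)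
  let ?colorings = "{col. \<forall>x. (x \<in> {1..n} \<longrightarrow> col x \<in> {..c + m}) \<and> (x \<notin> {1..n} \<longrightarrow> col x = 0)}"
  show "colored_B_partitions c m n \<subseteq> {P. partition_on {0..n} P} \<times> ?colorings"
  proof (rule subrelI)
    fix P col assume "(P, col) \<in> colored_B_partitions c m n"
    then have P: "partition_on {0..n} P" and col: "admissible_coloring c m P col"
      and zero: "\<forall>x. x \<notin> {1..n} \<longrightarrow> col x = 0"
      by (simp_all add: colored_B_partitions_iff)
    have "col x \<le> c + m" if "x \<in> {1..n}" for x
    proof -
      have "x \<in> \<Union>P" using partition_onD1[OF P] that by auto
      then obtain b where "b \<in> P" "x \<in> b" by blast
      with col have "admissible_block c m col b" by (simp add: admissible_coloring_def)
      with \<open>x \<in> b\<close> have "x \<noteq> 0 \<longrightarrow> (if x = Min b then col x = 0 else col x < palette c m b)"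
        unfolding admissible_block_def by blast
      with that have "col x = 0 \<or> col x < palette c m b" by (auto split: if_splits)
      then show ?thesis by (auto simp: palette_def split: if_splits)
    qed
    then show "(P, col) \<in> {P. partition_on {0..n} P} \<times> ?colorings" using P zero by auto
  qed
  show "finite ({P. partition_on {0..n} P} \<times> ?colorings)"
    by (intro finite_cartesian_product finitely_many_partition_on finite_set_of_finite_funs) auto
qed

lemma colored_B_partitions_0: "colored_B_partitions c m 0 = {({{0}}, \<lambda>_. 0)}"
proof (intro equalityI subsetI)
  fix z assume "z \<in> colored_B_partitions c m 0"
  then obtain P col where z: "z = (P, col)" and P: "partition_on {0} P" and col: "\<forall>x. col x = 0"
    by (cases z) (auto simp: colored_B_partitions_iff)
  have "b = {0}" if "b \<in> P" for b
  proof -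
    have "b \<subseteq> {0}" "b \<noteq> {}" using partition_onD1[OF P] partition_onD3[OF P] that by blast+
    then show ?thesis by (simp add: subset_singleton_iff)
  qed
  moreover have "P \<noteq> {}" using partition_onD1[OF P] by auto
  ultimately have "P = {{0}}" by blast
  then show "z \<in> {({{0}}, \<lambda>_. 0)}" using z col by auto
next
  fix z :: "nat set set \<times> (nat \<Rightarrow> nat)" assume "z \<in> {({{0}}, \<lambda>_. 0)}"
  then show "z \<in> colored_B_partitions c m 0"
    by (auto simp: colored_B_partitions_iff partition_on_space admissible_coloring_def admissible_block_def)
qed

section \<open>The recurrence for the numbers T(n,k)\<close>

definition colored_B_partitions_nz :: "nat \<Rightarrow> nat \<Rightarrow> nat \<Rightarrow> nat \<Rightarrow> (nat set set \<times> (nat \<Rightarrow> nat)) set" where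
  "colored_B_partitions_nz c m n k = {(P, col) \<in> colored_B_partitions c m n. card (nonzero_blocks P) = k}"

text \<open>A triple \<open>((P, col), b, j)\<close> records that the new element joins block \<open>b\<close> with color \<open>j\<close>.\<close>

definition block_color_choices ::
    "nat \<Rightarrow> nat \<Rightarrow> nat \<Rightarrow> nat \<Rightarrow> ((nat set set \<times> (nat \<Rightarrow> nat)) \<times> nat set \<times> nat) set" where
  "block_color_choices c m n k = (SIGMA z:colored_B_partitions_nz c m n k. SIGMA b:fst z. {..<palette c m b})"

definition new_singleton_block :: "nat \<Rightarrow> nat set set \<times> (nat \<Rightarrow> nat) \<Rightarrow> nat set set \<times> (nat \<Rightarrow> nat)" where
  "new_singleton_block a = (\<lambda>(P, col). (insert {a} P, col))"

definition join_block :: "nat \<Rightarrow> (nat set set \<times> (nat \<Rightarrow> nat)) \<times> nat set \<times> nat \<Rightarrow> nat set set \<times> (nat \<Rightarrow> nat)" where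
  "join_block a = (\<lambda>((P, col), b, j). (add_to_block a b P, col(a := j)))"

lemma T_num_eq_card: "T_num c m n k = card (colored_B_partitions_nz c m n k)"
  by (simp add: T_num_def colored_B_partitions_nz_def)

lemma finite_colored_B_partitions_nz: "finite (colored_B_partitions_nz c m n k)"
  using finite_colored_B_partitions[of c m n]
  by (rule finite_subset[rotated]) (auto simp: colored_B_partitions_nz_def)

lemma sum_palette:
  assumes P: "partition_on {0..n} P"
  shows "(\<Sum>b\<in>P. palette c m b) = c + m * card (nonzero_blocks P)"
proof -
  have "0 \<in> \<Union>P" using partition_onD1[OF P] by auto
  then obtain B where B: "B \<in> P" "0 \<in> B" by blast
  have "P \<inter> {b. 0 \<in> b} = {B}" using partition_on_block_unique[OF P _ B(1) _ B(2)] B by blast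
  moreover have "P \<inter> - {b. 0 \<in> b} = nonzero_blocks P" by (auto simp: nonzero_blocks_def)
  moreover have "finite P" by (rule finite_elements[OF finite_atLeastAtMost P])
  ultimately show ?thesis by (simp add: palette_def sum.If_cases)
qed

lemma card_block_color_choices:
  "card (block_color_choices c m n k) = (c + m * k) * card (colored_B_partitions_nz c m n k)"
proof -
  have blocks: "finite P \<and> card (SIGMA b:P. {..<palette c m b}) = c + m * k"
    if "(P, col) \<in> colored_B_partitions_nz c m n k" for P col
  proof -
    have P: "partition_on {0..n} P" "card (nonzero_blocks P) = k"
      using that by (simp_all add: colored_B_partitions_nz_def colored_B_partitions_iff)
    then have "finite P" by (intro finite_elements[OF finite_atLeastAtMost])
    then show ?thesis using sum_palette[OF P(1)] P(2) by simp
  qed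
  have "card (block_color_choices c m n k) =
      (\<Sum>z\<in>colored_B_partitions_nz c m n k. card (SIGMA b:fst z. {..<palette c m b}))"
    unfolding block_color_choices_def using blocks
    by (intro card_SigmaI finite_colored_B_partitions_nz) auto
  also have "\<dots> = (\<Sum>z\<in>colored_B_partitions_nz c m n k. c + m * k)"
    using blocks by (intro sum.cong refl) (metis prod.collapse)
  finally show ?thesis by simp
qed

lemma card_nonzero_blocks_Suc:
  assumes "(P, col) \<in> colored_B_partitions c m n"
  shows "card (nonzero_blocks (insert {Suc n} P)) = Suc (card (nonzero_blocks P))"
    and "card (nonzero_blocks (add_to_block (Suc n) b P)) = card (nonzero_blocks P)"
  using colored_B_partition_facts[OF assms]
  by (simp_all add: card_nonzero_blocks_insert_singleton card_nonzero_blocks_add_to_block)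

lemma colored_B_partitions_nz_Suc_subset:
  "colored_B_partitions_nz c m (Suc n) k \<subseteq>
     new_singleton_block (Suc n) ` (if k = 0 then {} else colored_B_partitions_nz c m n (k - 1)) \<union>
     join_block (Suc n) ` block_color_choices c m n k"
  (is "?lhs \<subseteq> ?singleton \<union> ?join")
proof
  fix z assume "z \<in> ?lhs"
  then obtain P col where z: "z = (P, col)" and P: "(P, col) \<in> colored_B_partitions c m (Suc n)"
    and k: "card (nonzero_blocks P) = k"
    by (auto simp: colored_B_partitions_nz_def)
  show "z \<in> ?singleton \<union> ?join"
  proof (rule colored_B_partition_Suc_cases[OF P])
    fix P0 assume P0: "(P0, col) \<in> colored_B_partitions c m n" and P_eq: "P = insert {Suc n} P0"
    then have "k = Suc (card (nonzero_blocks P0))" using k card_nonzero_blocks_Suc(1) by blast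
    then have "(P0, col) \<in> (if k = 0 then {} else colored_B_partitions_nz c m n (k - 1))"
      using P0 by (simp add: colored_B_partitions_nz_def)
    moreover have "z = new_singleton_block (Suc n) (P0, col)"
      by (simp add: z P_eq new_singleton_block_def)
    ultimately show ?thesis by blast
  next
    fix P0 b assume P0: "(P0, col(Suc n := 0)) \<in> colored_B_partitions c m n" and b: "b \<in> P0"
      and j: "col (Suc n) < palette c m b" and P_eq: "P = add_to_block (Suc n) b P0"
    then have "((P0, col(Suc n := 0)), b, col (Suc n)) \<in> block_color_choices c m n k"
      using k card_nonzero_blocks_Suc(2)[OF P0]
      by (simp add: block_color_choices_def colored_B_partitions_nz_def)
    moreover have "z = join_block (Suc n) ((P0, col(Suc n := 0)), b, col (Suc n))"
      by (simp add: z P_eq join_block_def)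
    ultimately show ?thesis by blast
  qed
qed

lemma colored_B_partitions_nz_Suc:
  "colored_B_partitions_nz c m (Suc n) k =
     new_singleton_block (Suc n) ` (if k = 0 then {} else colored_B_partitions_nz c m n (k - 1)) \<union>
     join_block (Suc n) ` block_color_choices c m n k"
  (is "?lhs = ?singleton \<union> ?join")
proof (rule equalityI[OF colored_B_partitions_nz_Suc_subset subsetI])
  fix z assume "z \<in> ?singleton \<union> ?join"
  then show "z \<in> ?lhs"
  proof
    assume "z \<in> ?singleton"
    then obtain P col where "k \<noteq> 0" "(P, col) \<in> colored_B_partitions_nz c m n (k - 1)"
      "z = (insert {Suc n} P, col)"
      by (auto simp: new_singleton_block_def split: if_splits)
    then show ?thesis
      using colored_B_partition_insert_singleton card_nonzero_blocks_Suc(1)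
      by (auto simp: colored_B_partitions_nz_def)
  next
    assume "z \<in> ?join"
    then obtain P col b j where "(P, col) \<in> colored_B_partitions_nz c m n k" "b \<in> P"
      "j < palette c m b" "z = (add_to_block (Suc n) b P, col(Suc n := j))"
      by (auto simp: join_block_def block_color_choices_def)
    then show ?thesis
      using colored_B_partition_add_to_block card_nonzero_blocks_Suc(2)
      by (auto simp: colored_B_partitions_nz_def)
  qed
qed

lemma inj_on_new_singleton_block: "inj_on (new_singleton_block (Suc n)) (colored_B_partitions c m n)"
proof (rule inj_onI, clarify)
  fix P col P' col'
  assume "(P, col) \<in> colored_B_partitions c m n" "(P', col') \<in> colored_B_partitions c m n"
    and "new_singleton_block (Suc n) (P, col) = new_singleton_block (Suc n) (P', col')"
  then show "P = P' \<and> col = col'"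
    using colored_B_partition_facts(4) by (simp add: new_singleton_block_def) (metis insert_ident)
qed

lemma inj_on_join_block: "inj_on (join_block (Suc n)) (block_color_choices c m n k)"
proof (rule inj_onI)
  fix w w' assume w: "w \<in> block_color_choices c m n k" and w': "w' \<in> block_color_choices c m n k"
    and eq_w: "join_block (Suc n) w = join_block (Suc n) w'"
  obtain P col b j where w_eq: "w = ((P, col), b, j)" by (metis prod.collapse)
  obtain P' col' b' j' where w'_eq: "w' = ((P', col'), b', j')" by (metis prod.collapse)
  note z = w[unfolded w_eq] and z' = w'[unfolded w'_eq] and eq = eq_w[unfolded w_eq w'_eq]
  have P: "(P, col) \<in> colored_B_partitions c m n" "b \<in> P"
    and P': "(P', col') \<in> colored_B_partitions c m n" "b' \<in> P'"
    using z z' by (auto simp: block_color_choices_def colored_B_partitions_nz_def)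
  have blocks: "add_to_block (Suc n) b P = add_to_block (Suc n) b' P'"
    and colors: "col(Suc n := j) = col'(Suc n := j')"
    using eq by (simp_all add: join_block_def)
  have "P = P' \<and> b = b'"
    using add_to_block_inject[OF _ _ P(2) P'(2) blocks]
      colored_B_partition_facts(3)[OF P(1)] colored_B_partition_facts(3)[OF P'(1)] by blast
  moreover have "j = j'" using fun_cong[OF colors, of "Suc n"] by simp
  moreover have "col = col'"
  proof
    fix x show "col x = col' x"
      using fun_cong[OF colors, of x] colored_B_partition_facts(6)[OF P(1)]
        colored_B_partition_facts(6)[OF P'(1)] by (cases "x = Suc n") auto
  qed
  ultimately show "w = w'" by (simp add: w_eq w'_eq)
qed

lemma new_singleton_block_disjoint_join_block:
  "new_singleton_block (Suc n) ` colored_B_partitions c m n \<inter> join_block (Suc n) ` block_color_choices c m n k = {}"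
proof -
  have "{Suc n} \<notin> fst (join_block (Suc n) w)" if "w \<in> block_color_choices c m n k" for w
  proof -
    obtain P col b j where w: "w = ((P, col), b, j)" by (metis prod.collapse)
    then have P: "(P, col) \<in> colored_B_partitions c m n"
      using that by (auto simp: block_color_choices_def colored_B_partitions_nz_def)
    show ?thesis
      using singleton_notin_add_to_block colored_B_partition_facts(3,5)[OF P]
      by (simp add: w join_block_def)
  qed
  moreover have "{Suc n} \<in> fst (new_singleton_block (Suc n) z)" for z
    by (simp add: new_singleton_block_def split: prod.splits)
  ultimately show ?thesis by fastforce
qed

lemma T_num_Suc:
  "T_num c m (Suc n) k = (if k = 0 then 0 else T_num c m n (k - 1)) + (c + m * k) * T_num c m n k"
proof -
  let ?S = "if k = 0 then {} else colored_B_partitions_nz c m n (k - 1)"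
  have sub: "?S \<subseteq> colored_B_partitions c m n" by (auto simp: colored_B_partitions_nz_def)
  have "finite ?S" by (simp add: finite_colored_B_partitions_nz)
  moreover have "finite (block_color_choices c m n k)"
    using finite_colored_B_partitions_nz[of c m "Suc n" k]
    by (metis colored_B_partitions_nz_Suc finite_Un finite_imageD inj_on_join_block)
  moreover have "new_singleton_block (Suc n) ` ?S \<inter> join_block (Suc n) ` block_color_choices c m n k = {}"
    using new_singleton_block_disjoint_join_block sub by blast
  moreover have "card (new_singleton_block (Suc n) ` ?S) = card ?S"
    using inj_on_new_singleton_block sub by (intro card_image) (rule inj_on_subset)
  moreover have "card (join_block (Suc n) ` block_color_choices c m n k) = card (block_color_choices c m n k)"
    by (rule card_image[OF inj_on_join_block])
  ultimately show ?thesis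
    by (simp add: T_num_eq_card colored_B_partitions_nz_Suc card_Un_disjoint card_block_color_choices)
qed

lemma T_num_0: "T_num c m 0 k = (if k = 0 then 1 else 0)"
proof -
  have "nonzero_blocks {{0}} = {}" by (auto simp: nonzero_blocks_def)
  then have "colored_B_partitions_nz c m 0 k = (if k = 0 then {({{0}}, \<lambda>_. 0)} else {})"
    by (auto simp: colored_B_partitions_nz_def colored_B_partitions_0)
  then show ?thesis by (simp add: T_num_eq_card)
qed

lemma T_num_eq_0: "n < k \<Longrightarrow> T_num c m n k = 0"
  by (induction n arbitrary: k) (simp_all add: T_num_0 T_num_Suc)

lemma T_num_diag: "T_num c m n n = 1"
  by (induction n) (simp_all add: T_num_0 T_num_Suc T_num_eq_0)

section \<open>Real-rootedness\<close>

lemma poly_pderiv_prod_linear_at_root: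
  fixes r :: "nat \<Rightarrow> 'a::idom"
  assumes "i < n"
  shows "poly (pderiv (\<Prod>j<n. [:-r j, 1:])) (r i) = (\<Prod>j\<in>{..<n}-{i}. r i - r j)"
proof -
  let ?R = "\<Prod>j\<in>{..<n}-{i}. [:-r j, 1:]"
  have "(\<Prod>j<n. [:-r j, 1:]) = [:-r i, 1:] * ?R"
    using assms by (simp add: prod.remove del: mult_pCons_left)
  then have "pderiv (\<Prod>j<n. [:-r j, 1:]) = [:-r i, 1:] * pderiv ?R + ?R"
    by (simp add: pderiv_mult pderiv_pCons del: mult_pCons_left)
  then show ?thesis by (simp add: poly_prod del: mult_pCons_left)
qed

lemma sign_prod_root_differences:
  fixes r :: "nat \<Rightarrow> real"
  assumes r: "strict_mono_on {..<n} r" and i: "i < n"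
  shows "(-1) ^ (n - Suc i) * (\<Prod>j\<in>{..<n}-{i}. r i - r j) > 0"
proof -
  let ?S = "{..<n} - {i}"
  have "?S \<inter> {j. i < j} = {i<..<n}" using i by auto
  then have "(\<Prod>j\<in>?S. if i < j then -1 else 1 :: real) = (-1) ^ (n - Suc i)"
    by (simp add: prod.If_cases)
  moreover have "(\<Prod>j\<in>?S. (if i < j then -1 else 1) * (r i - r j)) > 0"
  proof (rule prod_pos)
    fix j assume j: "j \<in> ?S"
    then have "i < j \<Longrightarrow> r i < r j" "j < i \<Longrightarrow> r j < r i"
      using i by (auto intro: strict_mono_onD[OF r])
    then show "0 < (if i < j then -1 else 1) * (r i - r j)"
      using j by (cases "i < j") auto
  qed
  ultimately show ?thesis by (simp add: prod.distrib)
qed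

lemma poly_sign_at_neg_infinity:
  fixes q :: "real poly"
  assumes "lead_coeff q > 0"
  shows "\<exists>x<t. (-1) ^ degree q * poly q x > 0"
proof -
  define q' where "q' = smult ((-1) ^ degree q) (pcompose q [:0, -1:])"
  have "lead_coeff (pcompose q [:0, -1:]) = lead_coeff q * (-1) ^ degree q"
    by (subst lead_coeff_comp) simp_all
  then have "lead_coeff q' = lead_coeff q"
    by (simp add: q'_def flip: power_mult_distrib)
  then obtain N where N: "\<forall>x\<ge>N. poly q' x \<ge> lead_coeff q'"
    using poly_pinfty_gt_lc[of q'] assms by auto
  define x where "x = max N (1 - t)"
  have "(-1) ^ degree q * poly q (-x) = poly q' x" by (simp add: q'_def poly_pcompose)
  also have "\<dots> \<ge> lead_coeff q'" using N by (simp add: x_def)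
  finally have "(-1) ^ degree q * poly q (-x) > 0" using assms \<open>lead_coeff q' = lead_coeff q\<close> by simp
  then show ?thesis by (intro exI[of _ "-x"]) (simp add: x_def)
qed

lemma roots_between_sign_changes:
  fixes q :: "real poly" and t :: "nat \<Rightarrow> real"
  assumes t: "\<And>k. k < N \<Longrightarrow> t k < t (Suc k)"
    and sign: "\<And>k. k \<le> N \<Longrightarrow> (-1) ^ (N - k) * poly q (t k) > 0"
  obtains s where "strict_mono_on {..<N} s" "\<And>k. k < N \<Longrightarrow> t k < s k \<and> s k < t (Suc k)"
    "\<And>k. k < N \<Longrightarrow> poly q (s k) = 0"
proof -
  have "\<exists>x. t k < x \<and> x < t (Suc k) \<and> poly q x = 0" if k: "k < N" for k
  proof -
    define e :: real where "e = (-1) ^ (N - Suc k)"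
    have "N - k = Suc (N - Suc k)" using k by simp
    then have "(-1) ^ (N - k) = - e" by (simp add: e_def)
    then have "e * poly q (t k) < 0" using sign[of k] k by simp
    moreover have "e * poly q (t (Suc k)) > 0" using sign[of "Suc k"] k by (simp add: e_def)
    ultimately have "(e * poly q (t k)) * (e * poly q (t (Suc k))) < 0" by (rule mult_neg_pos)
    also have "(e * poly q (t k)) * (e * poly q (t (Suc k))) = (e * e) * (poly q (t k) * poly q (t (Suc k)))"
      by (simp only: ac_simps)
    also have "e * e = 1" by (simp add: e_def flip: power_mult_distrib)
    finally have "poly q (t k) * poly q (t (Suc k)) < 0" by simp
    then show ?thesis using poly_IVT[OF t[OF k]] by blast
  qed
  then obtain s where s: "\<And>k. k < N \<Longrightarrow> t k < s k \<and> s k < t (Suc k) \<and> poly q (s k) = 0"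
    by metis
  have "strict_mono_on {..<N} s"
  proof (rule strict_mono_onI)
    fix a b assume "a \<in> {..<N}" "b \<in> {..<N}" "a < b"
    moreover have "t (Suc a) \<le> t b"
      by (rule lift_Suc_mono_le_ivl[of "{..<N}" t])
        (use \<open>a < b\<close> \<open>b \<in> {..<N}\<close> in \<open>auto intro: less_imp_le t\<close>)
    ultimately have "s a < t (Suc a)" "t (Suc a) \<le> t b" "t b < s b" using s by auto
    then show "s a < s b" by linarith
  qed
  then show ?thesis using that s by blast
qed

lemma poly_eq_prod_roots:
  fixes q :: "'a::idom poly"
  assumes "degree q \<le> N" "coeff q N = 1" "inj_on s {..<N}" "\<And>k. k < N \<Longrightarrow> poly q (s k) = 0"
  shows "q = (\<Prod>k<N. [:-s k, 1:])"
proof (rule poly_eqI_degree_lead_coeff[where n = N and A = "s ` {..<N}"])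
  have "degree (\<Prod>k<N. [:-s k, 1:]) = N" by (subst degree_prod_sum_eq) auto
  moreover have "lead_coeff (\<Prod>k<N. [:-s k, 1:]) = 1" by (simp add: lead_coeff_prod)
  ultimately show "coeff q N = coeff (\<Prod>k<N. [:-s k, 1:]) N" "degree (\<Prod>k<N. [:-s k, 1:]) \<le> N"
    using assms(2) by simp_all
  show "N \<le> card (s ` {..<N})" using assms(3) by (simp add: card_image)
  show "degree q \<le> N" by (fact assms(1))
  fix z assume "z \<in> s ` {..<N}"
  then show "poly q z = poly (\<Prod>k<N. [:-s k, 1:]) z"
    using assms(4) by (force simp: poly_prod)
qed

definition recurrence_poly :: "real \<Rightarrow> real \<Rightarrow> real poly \<Rightarrow> real poly" where
  "recurrence_poly c m p = [:c, 1:] * p + smult m (pCons 0 (pderiv p))"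

lemma poly_recurrence_poly:
  "poly (recurrence_poly c m p) x = (c + x) * poly p x + m * x * poly (pderiv p) x"
  by (simp add: recurrence_poly_def algebra_simps)

lemma recurrence_poly_monic:
  assumes "degree p = n" "lead_coeff p = 1"
  shows "coeff (recurrence_poly c m p) (Suc n) = 1" "degree (recurrence_poly c m p) = Suc n"
proof -
  show coeff: "coeff (recurrence_poly c m p) (Suc n) = 1"
    using assms by (simp add: recurrence_poly_def coeff_pderiv coeff_eq_0)
  have "degree (recurrence_poly c m p) \<le> Suc n"
    using assms by (auto simp: recurrence_poly_def coeff_pderiv coeff_pCons coeff_eq_0
        intro!: degree_le split: nat.split)
  then show "degree (recurrence_poly c m p) = Suc n"
    using coeff by (metis le_antisym le_degree zero_neq_one)
qed

lemma recurrence_poly_sign_at_root: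
  fixes r :: "nat \<Rightarrow> real"
  assumes m: "m > 0" and r: "strict_mono_on {..<n} r" and i: "i < n" "r i < 0"
  shows "(-1) ^ (n - i) * poly (recurrence_poly c m (\<Prod>j<n. [:-r j, 1:])) (r i) > 0"
proof -
  have "poly (\<Prod>j<n. [:-r j, 1:]) (r i) = 0" using i by (auto simp: poly_prod)
  then have "poly (recurrence_poly c m (\<Prod>j<n. [:-r j, 1:])) (r i) =
      m * r i * (\<Prod>j\<in>{..<n}-{i}. r i - r j)"
    using i by (simp add: poly_recurrence_poly poly_pderiv_prod_linear_at_root)
  moreover have "n - i = Suc (n - Suc i)" using i by simp
  ultimately have "(-1) ^ (n - i) * poly (recurrence_poly c m (\<Prod>j<n. [:-r j, 1:])) (r i) =
      (m * - r i) * ((-1) ^ (n - Suc i) * (\<Prod>j\<in>{..<n}-{i}. r i - r j))"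
    by (simp add: algebra_simps)
  also have "\<dots> > 0"
  proof (rule mult_pos_pos)
    show "m * - r i > 0" using m i by (simp add: mult_pos_neg)
  qed (rule sign_prod_root_differences[OF r i(1)])
  finally show ?thesis .
qed

lemma recurrence_poly_neg_roots:
  fixes c m :: real and r :: "nat \<Rightarrow> real"
  assumes c: "c > 0" and m: "m > 0" and r: "strict_mono_on {..<n} r" "\<And>i. i < n \<Longrightarrow> r i < 0"
  obtains s where "strict_mono_on {..<Suc n} s" "\<And>i. i < Suc n \<Longrightarrow> s i < 0"
    "recurrence_poly c m (\<Prod>i<n. [:-r i, 1:]) = (\<Prod>i<Suc n. [:-s i, 1:])"
proof -
  define p where "p = (\<Prod>i<n. [:-r i, 1:])"
  define q where "q = recurrence_poly c m p"
  have "degree p = n" unfolding p_def by (subst degree_prod_sum_eq) auto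
  moreover have "lead_coeff p = 1" unfolding p_def by (simp add: lead_coeff_prod)
  ultimately have coeff_q: "coeff q (Suc n) = 1" and deg_q: "degree q = Suc n"
    unfolding q_def by (rule recurrence_poly_monic)+
  obtain L where L: "L < (if n = 0 then 0 else r 0)" "(-1) ^ Suc n * poly q L > 0"
    using poly_sign_at_neg_infinity[of q] coeff_q deg_q by auto
  \<comment> \<open>\<open>q\<close> alternates in sign along \<open>L < r\<^sub>0 < \<dots> < r\<^sub>n\<^sub>-\<^sub>1 < 0\<close>\<close>
  define t where "t k = (if k = 0 then L else if k \<le> n then r (k - 1) else 0)" for k
  have t_less: "t k < t (Suc k)" if "k < Suc n" for k
    using that L(1) r by (auto simp: t_def intro: strict_mono_onD[OF r(1)])
  have sign: "(-1) ^ (Suc n - k) * poly q (t k) > 0" if "k \<le> Suc n" for k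
  proof -
    consider "k = 0" | "k = Suc n" | i where "i < n" "k = Suc i"
      using \<open>k \<le> Suc n\<close> by (metis less_Suc_eq_0_disj le_neq_implies_less Suc_less_SucD)
    then show ?thesis
    proof cases
      case 1
      then show ?thesis using L(2) by (simp add: t_def)
    next
      case 2
      have "poly p 0 = (\<Prod>i<n. - r i)" by (simp add: p_def poly_prod)
      also have "\<dots> > 0" using r(2) by (intro prod_pos) auto
      finally show ?thesis using 2 c by (simp add: t_def q_def poly_recurrence_poly)
    next
      case 3
      then show ?thesis
        using recurrence_poly_sign_at_root[OF m r(1) 3(1) r(2)[OF 3(1)], of c]
        by (simp add: t_def q_def p_def)
    qed
  qed
  obtain s where s: "strict_mono_on {..<Suc n} s" "\<And>k. k < Suc n \<Longrightarrow> t k < s k \<and> s k < t (Suc k)"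
    "\<And>k. k < Suc n \<Longrightarrow> poly q (s k) = 0"
    using roots_between_sign_changes[of "Suc n" t q] t_less sign by metis
  have "s i < 0" if "i < Suc n" for i
  proof -
    have "t (Suc i) \<le> t (Suc n)"
      by (rule lift_Suc_mono_le_ivl[of "{..<Suc n}" t]) (use that in \<open>auto intro: less_imp_le t_less\<close>)
    then show ?thesis using s(2)[OF that] by (simp add: t_def)
  qed
  moreover have "q = (\<Prod>i<Suc n. [:-s i, 1:])"
    using deg_q coeff_q strict_mono_on_imp_inj_on[OF s(1)] s(3) by (intro poly_eq_prod_roots) auto
  ultimately show ?thesis using that s(1) by (simp add: q_def p_def)
qed

primrec T_poly :: "nat \<Rightarrow> nat \<Rightarrow> nat \<Rightarrow> real poly" where
  "T_poly c m 0 = 1"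
| "T_poly c m (Suc n) = recurrence_poly (real c) (real m) (T_poly c m n)"

lemma coeff_T_poly: "coeff (T_poly c m n) k = real (T_num c m n k)"
proof (induction n arbitrary: k)
  case 0
  then show ?case by (simp add: T_num_0 coeff_1)
next
  case (Suc n)
  then show ?case
    by (cases k) (simp_all add: T_num_Suc recurrence_poly_def coeff_pderiv algebra_simps)
qed

lemma poly_T_poly: "poly (T_poly c m n) x = (\<Sum>k\<le>n. real (T_num c m n k) * x ^ k)"
proof -
  have "degree (T_poly c m n) \<le> n" by (rule degree_le) (simp add: coeff_T_poly T_num_eq_0)
  moreover have "n \<le> degree (T_poly c m n)" by (rule le_degree) (simp add: coeff_T_poly T_num_diag)
  ultimately show ?thesis by (simp add: poly_altdef coeff_T_poly)
qed

lemma T_poly_neg_roots: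
  assumes "c > 0" "m > 0"
  shows "\<exists>r. strict_mono_on {..<n} r \<and> (\<forall>i<n. r i < 0) \<and> T_poly c m n = (\<Prod>i<n. [:-r i, 1:])"
proof (induction n)
  case 0
  show ?case by simp
next
  case (Suc n)
  then obtain r where "strict_mono_on {..<n} r" "\<forall>i<n. r i < 0" "T_poly c m n = (\<Prod>i<n. [:-r i, 1:])"
    by blast
  then show ?case
    using recurrence_poly_neg_roots[of "real c" "real m" n r] assms by (metis T_poly.simps(2) of_nat_0_less_iff)
qed

theorem theorem2:
  fixes c m n :: nat
  assumes "c > 0" and "m > 0" and "n \<ge> 1"
  shows "\<exists>S :: real set. card S = n \<and> (\<forall>r\<in>S. r < 0 \<and>
           (\<Sum>k\<le>n. real (T_num c m n k) * r ^ k) = 0)"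
proof -
  obtain r where r: "strict_mono_on {..<n} r" "\<forall>i<n. r i < 0"
    and T: "T_poly c m n = (\<Prod>i<n. [:-r i, 1:])"
    using T_poly_neg_roots[OF assms(1,2)] by blast
  have "card (r ` {..<n}) = n"
    using strict_mono_on_imp_inj_on[OF r(1)] by (simp add: card_image)
  moreover have "x < 0 \<and> (\<Sum>k\<le>n. real (T_num c m n k) * x ^ k) = 0" if "x \<in> r ` {..<n}" for x
    using that r(2) by (auto simp: poly_T_poly[symmetric] T poly_prod)
  ultimately show ?thesis by blast
qed

end
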